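(* Let $G$ be the $m\times n$ grid with $m,n\ge 2$ and a cost function $c:V\to\mathbb{Q}_{\ge 0}$. (i) For every zigzag sequence $q_1,\dots,q_{2k}$ and every sequence $t_1,\dots,t_{2k}$ corresponding to it, the set $\{t_1,\dots,t_{2k}\}$ is a landmark set of $G$. (ii) Let $L$ be a landmark set of $G$ with $|L|\ge 4$ that is both minimal (with respect to inclusion) and of minimum cost. Then, after possibly renumbering the rows and columns of the grid by one of its eight symmetries (with the costs carried along), the vertices of $L$ can be ordered as $t_1,\dots,t_{2k}$ forming a perfect sequence for some zigzag sequence.
   Context: The $m\times n$ grid $G$ has vertex set $V=\{(i,j):1\le i\le m,\ 1\le j\le n\}$, with $(i_1,j_1),(i_2,j_2)$ adjacent iff $|i_1-i_2|+|j_1-j_2|=1$; thus $d((i_1,j_1),(i_2,j_2))=|i_1-i_2|+|j_1-j_2|$. The first coordinate is the row (row $1$ on top, row $m$ at the bottom) and the second is the column. A vertex $x$ separates $u,v$ if $d(x,u)\neq d(x,v)$. A landmark set is $L\subseteq V$ such that every pair of distinct vertices is separated by some vertex of $L$; it is minimal if no proper subset is a landmark set, and of minimum cost if $c(L)=\sum_{a\in L}c(a)$ is smallest among all landmark sets. The eight symmetries of the grid correspond to choosing which corner is numbered $(1,1)$ and which of its two neighbours is numbered $(1,2)$ (this may exchange the roles of $m$ and $n$). A zigzag sequence is a sequence $q_1,\dots,q_{2k}$ of vertices, $k\ge 2$, $q_i=(s_i,d_i)$, with $s_1=1$, $s_{2k}=m$; for even $i$: $d_i=d_{i-1}$ and $s_i>s_{i-1}$;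 for odd $i\ge 3$: $s_i=s_{i-1}$ and $d_i>d_{i-1}$. A sequence $t_1,\dots,t_{2k}$, $t_i=(b_i,c_i)$, corresponds to this zigzag sequence if $t_1=q_1$; for even $i$: $b_i=s_i$ and $c_i\le d_i$; for odd $i\ge 3$: $c_i=d_i$ and $b_i\le s_i$; and moreover $c_{2k}>c_1$. A corresponding sequence is perfect if its total cost $\sum_i c(t_i)$ is minimum among all sequences corresponding to the same zigzag sequence. *)

theory Defs
  imports Complex_Main
begin

type_synonym vertex = "nat \<times> nat"

text \<open>Vertex set of the m x n grid: (row, column), 1-based.\<close>
definition grid_V :: "nat \<Rightarrow> nat \<Rightarrow> vertex set" where
  "grid_V m n = {(i, j). 1 \<le> i \<and> i \<le> m \<and> 1 \<le> j \<and> j \<le> n}"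

definition grid_dist :: "vertex \<Rightarrow> vertex \<Rightarrow> int" where
  "grid_dist u v = \<bar>int (fst u) - int (fst v)\<bar> + \<bar>int (snd u) - int (snd v)\<bar>"

definition separates :: "vertex \<Rightarrow> vertex \<Rightarrow> vertex \<Rightarrow> bool" where
  "separates x u v \<longleftrightarrow> grid_dist x u \<noteq> grid_dist x v"

definition landmark_set :: "nat \<Rightarrow> nat \<Rightarrow> vertex set \<Rightarrow> bool" where
  "landmark_set m n L \<longleftrightarrow> L \<subseteq> grid_V m n \<and>
     (\<forall>u\<in>grid_V m n. \<forall>v\<in>grid_V m n. u \<noteq> v \<longrightarrow> (\<exists>x\<in>L. separates x u v))"

definition minimal_landmark_set :: "nat \<Rightarrow> nat \<Rightarrow> vertex set \<Rightarrow> bool" where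
  "minimal_landmark_set m n L \<longleftrightarrow> landmark_set m n L \<and> (\<forall>L'. L' \<subset> L \<longrightarrow> \<not> landmark_set m n L')"

definition min_cost_landmark_set :: "nat \<Rightarrow> nat \<Rightarrow> (vertex \<Rightarrow> rat) \<Rightarrow> vertex set \<Rightarrow> bool" where
  "min_cost_landmark_set m n c L \<longleftrightarrow> landmark_set m n L \<and>
     (\<forall>L'. landmark_set m n L' \<longrightarrow> sum c L \<le> sum c L')"

definition zigzag :: "nat \<Rightarrow> nat \<Rightarrow> nat \<Rightarrow> (nat \<Rightarrow> vertex) \<Rightarrow> bool" where
  "zigzag m n k q \<longleftrightarrow> k \<ge> 2 \<and> (\<forall>i\<in>{1..2*k}. q i \<in> grid_V m n) \<and>
     fst (q 1) = 1 \<and> fst (q (2*k)) = m \<and>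
     (\<forall>i\<in>{2..2*k}.
        (even i \<longrightarrow> snd (q i) = snd (q (i-1)) \<and> fst (q i) > fst (q (i-1))) \<and>
        (odd i \<longrightarrow> fst (q i) = fst (q (i-1)) \<and> snd (q i) > snd (q (i-1))))"

definition corresponds :: "nat \<Rightarrow> nat \<Rightarrow> nat \<Rightarrow> (nat \<Rightarrow> vertex) \<Rightarrow> (nat \<Rightarrow> vertex) \<Rightarrow> bool" where
  "corresponds m n k q t \<longleftrightarrow> (\<forall>i\<in>{1..2*k}. t i \<in> grid_V m n) \<and>
     t 1 = q 1 \<and>
     (\<forall>i\<in>{2..2*k}.
        (even i \<longrightarrow> fst (t i) = fst (q i) \<and> snd (t i) \<le> snd (q i)) \<and>
        (odd i \<longrightarrow> snd (t i) = snd (q i) \<and> fst (t i) \<le> fst (q i))) \<and>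
     snd (t (2*k)) > snd (t 1)"

definition seq_cost :: "(vertex \<Rightarrow> rat) \<Rightarrow> nat \<Rightarrow> (nat \<Rightarrow> vertex) \<Rightarrow> rat" where
  "seq_cost c k t = (\<Sum>i=1..2*k. c (t i))"

definition perfect :: "nat \<Rightarrow> nat \<Rightarrow> (vertex \<Rightarrow> rat) \<Rightarrow> nat \<Rightarrow> (nat \<Rightarrow> vertex) \<Rightarrow> (nat \<Rightarrow> vertex) \<Rightarrow> bool" where
  "perfect m n c k q t \<longleftrightarrow> corresponds m n k q t \<and>
     (\<forall>t'. corresponds m n k q t' \<longrightarrow> seq_cost c k t \<le> seq_cost c k t')"

text \<open>The eight symmetries, encoded as (swap, flip rows, flip columns).\<close>
type_synonym gsym = "bool \<times> bool \<times> bool"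

definition grid_sym :: "gsym \<Rightarrow> nat \<Rightarrow> nat \<Rightarrow> vertex \<Rightarrow> vertex" where
  "grid_sym s m n v = (case s of (sw, fr, fc) \<Rightarrow>
     (let i' = (if fr then m + 1 - fst v else fst v);
          j' = (if fc then n + 1 - snd v else snd v)
      in if sw then (j', i') else (i', j')))"

definition grid_sym_inv :: "gsym \<Rightarrow> nat \<Rightarrow> nat \<Rightarrow> vertex \<Rightarrow> vertex" where
  "grid_sym_inv s m n w = (case s of (sw, fr, fc) \<Rightarrow>
     (let p = (if sw then (snd w, fst w) else w)
      in (if fr then m + 1 - fst p else fst p, if fc then n + 1 - snd p else snd p)))"

definition grid_sym_dims :: "gsym \<Rightarrow> nat \<Rightarrow> nat \<Rightarrow> nat \<times> nat" where
  "grid_sym_dims s m n = (if fst s then (n, m) else (m, n))"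

end

theory Submission
  imports Defs
begin

text \<open>
  A set X of vertices separates the two diagonal neighbours (i, j + 1) and (i + 1, j) iff it meets
  the north-east or the south-west quadrant of the cut point (i, j), and it separates (i, j) and
  (i + 1, j + 1) iff it meets the north-west or the south-east quadrant. Together with the condition
  that X does not lie in a single interior row or column, these cut conditions characterise landmark
  sets: a pair of vertices in distinct rows and columns is separated by every vertex in two opposite
  quadrants of a cut through its midpoint, and a pair in a common row or column by every vertex off
  its perpendicular bisector.

  Call two vertices antidiagonal if neither lies strictly north-west of the other. A chain of
  pairwise consecutive antidiagonal vertices from the top row to the bottom row meets every
  north-east/south-west cut, and its end vertices meet every north-west/south-east cut if the chain
  ends weakly to the right of where it starts. The vertices of a sequence corresponding to a zigzag
  form such a chain, which gives (i).

  For (ii), a symmetry brings vertices of L into the top and the bottom row, the bottom one weakly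
  to the right. The north-east/south-west cuts force the antidiagonal relation to connect them
  inside L, and by minimality a shortest connecting path covers all of L. Non-consecutive vertices
  of a shortest path are strictly north-west ordered, so its steps alternate between south-west
  and north-east; by minimality again it leaves the top row in its first step and enters the
  bottom row in its last one. Such a path is a sequence corresponding to a zigzag, and it is perfect
  because by (i) every other corresponding sequence is a landmark set, which costs no less than L.
\<close>

section \<open>Landmark sets and quadrant cuts\<close>

lemma mem_grid_V [simp]: "(i, j) \<in> grid_V m n \<longleftrightarrow> 1 \<le> i \<and> i \<le> m \<and> 1 \<le> j \<and> j \<le> n"
  by (simp add: grid_V_def)

lemma grid_V_iff: "v \<in> grid_V m n \<longleftrightarrow> 1 \<le> fst v \<and> fst v \<le> m \<and> 1 \<le> snd v \<and> snd v \<le> n"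
  by (cases v) simp

lemma finite_grid_V: "finite (grid_V m n)"
proof -
  have "grid_V m n = {1..m} \<times> {1..n}" by (auto simp: grid_V_def)
  then show ?thesis by simp
qed

lemma separates_commute: "separates x u v \<longleftrightarrow> separates x v u"
  by (auto simp: separates_def)

definition ne_sw_cover :: "nat \<Rightarrow> nat \<Rightarrow> vertex set \<Rightarrow> bool" where
  "ne_sw_cover m n X \<longleftrightarrow> (\<forall>i j. 1 \<le> i \<longrightarrow> i < m \<longrightarrow> 1 \<le> j \<longrightarrow> j < n \<longrightarrow>
     (\<exists>x\<in>X. (fst x \<le> i \<and> j < snd x) \<or> (i < fst x \<and> snd x \<le> j)))"

definition nw_se_cover :: "nat \<Rightarrow> nat \<Rightarrow> vertex set \<Rightarrow> bool" where
  "nw_se_cover m n X \<longleftrightarrow> (\<forall>i j. 1 \<le> i \<longrightarrow> i < m \<longrightarrow> 1 \<le> j \<longrightarrow> j < n \<longrightarrow>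
     (\<exists>x\<in>X. (fst x \<le> i \<and> snd x \<le> j) \<or> (i < fst x \<and> j < snd x)))"

definition within_interior_row :: "nat \<Rightarrow> vertex set \<Rightarrow> bool" where
  "within_interior_row m X \<longleftrightarrow> (\<exists>r. 1 < r \<and> r < m \<and> (\<forall>x\<in>X. fst x = r))"

definition within_interior_column :: "nat \<Rightarrow> vertex set \<Rightarrow> bool" where
  "within_interior_column n X \<longleftrightarrow> (\<exists>c. 1 < c \<and> c < n \<and> (\<forall>x\<in>X. snd x = c))"

lemma not_within_interior_rowI: "x \<in> X \<Longrightarrow> fst x = 1 \<Longrightarrow> \<not> within_interior_row m X"
  unfolding within_interior_row_def by (metis less_irrefl)

lemma not_within_interior_columnI:
  "x \<in> X \<Longrightarrow> y \<in> X \<Longrightarrow> snd x \<noteq> snd y \<Longrightarrow> \<not> within_interior_column n X"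
  unfolding within_interior_column_def by metis

lemma separates_antidiagonal_pair:
  "separates x (i, Suc j) (Suc i, j) \<longleftrightarrow> (fst x \<le> i \<and> j < snd x) \<or> (i < fst x \<and> snd x \<le> j)"
  by (auto simp: separates_def grid_dist_def abs_if)

lemma separates_diagonal_pair:
  "separates x (i, j) (Suc i, Suc j) \<longleftrightarrow> (fst x \<le> i \<and> snd x \<le> j) \<or> (i < fst x \<and> j < snd x)"
  by (auto simp: separates_def grid_dist_def abs_if)

lemma separates_vertical_neighbours:
  "separates x (r - 1, j) (r + 1, j) \<longleftrightarrow> fst x \<noteq> r" if "1 \<le> r"
  using that by (auto simp: separates_def grid_dist_def abs_if)

lemma separates_horizontal_neighbours:
  "separates x (i, c - 1) (i, c + 1) \<longleftrightarrow> snd x \<noteq> c" if "1 \<le> c"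
  using that by (auto simp: separates_def grid_dist_def abs_if)

text \<open>The cut through the midpoint of the two vertices, rounded so that each of the two quadrants lies
  strictly closer to one of them.\<close>
lemma separates_by_diagonal_midcut:
  assumes "i1 < i2" "j1 < j2"
    and "(fst x \<le> (i1 + i2 - 1) div 2 \<and> snd x \<le> (j1 + j2) div 2) \<or>
         ((i1 + i2 - 1) div 2 < fst x \<and> (j1 + j2) div 2 < snd x)"
  shows "separates x (i1, j1) (i2, j2)"
  using assms by (auto simp: separates_def grid_dist_def abs_if)

lemma separates_by_antidiagonal_midcut:
  assumes "i1 < i2" "j2 < j1"
    and "(fst x \<le> (i1 + i2 - 1) div 2 \<and> (j1 + j2 - 1) div 2 < snd x) \<or>
         ((i1 + i2 - 1) div 2 < fst x \<and> snd x \<le> (j1 + j2 - 1) div 2)"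
  shows "separates x (i1, j1) (i2, j2)"
  using assms by (auto simp: separates_def grid_dist_def abs_if)

lemma separator_for_distinct_rows:
  assumes "2 \<le> m" "2 \<le> n" and "ne_sw_cover m n X" "nw_se_cover m n X" "\<not> within_interior_row m X"
    and "(i1, j1) \<in> grid_V m n" "(i2, j2) \<in> grid_V m n" "i1 < i2"
  shows "\<exists>x\<in>X. separates x (i1, j1) (i2, j2)"
proof -
  consider "j1 < j2" | "j2 < j1" | "j1 = j2" by linarith
  then show ?thesis
  proof cases
    case 1
    with assms obtain x where "x \<in> X" "(fst x \<le> (i1 + i2 - 1) div 2 \<and> snd x \<le> (j1 + j2) div 2) \<or>
        ((i1 + i2 - 1) div 2 < fst x \<and> (j1 + j2) div 2 < snd x)"
      unfolding nw_se_cover_def by (elim allE[of _ "(i1 + i2 - 1) div 2"] allE[of _ "(j1 + j2) div 2"]) auto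
    with 1 \<open>i1 < i2\<close> show ?thesis by (blast intro: separates_by_diagonal_midcut)
  next
    case 2
    with assms obtain x where "x \<in> X" "(fst x \<le> (i1 + i2 - 1) div 2 \<and> (j1 + j2 - 1) div 2 < snd x) \<or>
        ((i1 + i2 - 1) div 2 < fst x \<and> snd x \<le> (j1 + j2 - 1) div 2)"
      unfolding ne_sw_cover_def by (elim allE[of _ "(i1 + i2 - 1) div 2"] allE[of _ "(j1 + j2 - 1) div 2"]) auto
    with 2 \<open>i1 < i2\<close> show ?thesis by (blast intro: separates_by_antidiagonal_midcut)
  next
    case 3
    obtain x0 where "x0 \<in> X"
      using assms(1-3) unfolding ne_sw_cover_def by (elim allE[of _ 1]) auto
    show ?thesis
    proof (rule ccontr)
      assume "\<not> ?thesis"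
      then have mid: "2 * fst x = i1 + i2" if "x \<in> X" for x
        using that 3 \<open>i1 < i2\<close> by (auto simp: separates_def grid_dist_def abs_if split: if_splits)
      have "1 < fst x0" "fst x0 < m"
        using mid[OF \<open>x0 \<in> X\<close>] assms(6-8) by auto
      moreover have "fst x = fst x0" if "x \<in> X" for x
        using mid[OF that] mid[OF \<open>x0 \<in> X\<close>] by linarith
      ultimately show False
        using assms(5) by (auto simp: within_interior_row_def)
    qed
  qed
qed

lemma separator_for_same_row:
  assumes "X \<noteq> {}" "\<not> within_interior_column n X"
    and "(i, j1) \<in> grid_V m n" "(i, j2) \<in> grid_V m n" "j1 < j2"
  shows "\<exists>x\<in>X. separates x (i, j1) (i, j2)"
proof (rule ccontr)
  assume "\<not> ?thesis"
  then have mid: "2 * snd x = j1 + j2" if "x \<in> X" for x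
    using that \<open>j1 < j2\<close> by (auto simp: separates_def grid_dist_def abs_if split: if_splits)
  obtain x0 where "x0 \<in> X" using assms(1) by blast
  have "1 < snd x0" "snd x0 < n"
    using mid[OF \<open>x0 \<in> X\<close>] assms(3-5) by auto
  moreover have "snd x = snd x0" if "x \<in> X" for x
    using mid[OF that] mid[OF \<open>x0 \<in> X\<close>] by linarith
  ultimately show False
    using assms(2) by (auto simp: within_interior_column_def)
qed

theorem landmark_set_iff:
  assumes "2 \<le> m" "2 \<le> n"
  shows "landmark_set m n X \<longleftrightarrow> X \<subseteq> grid_V m n \<and> ne_sw_cover m n X \<and> nw_se_cover m n X \<and>
    \<not> within_interior_row m X \<and> \<not> within_interior_column n X"
proof
  assume L: "landmark_set m n X"
  then have sep: "\<exists>x\<in>X. separates x u v" if "u \<in> grid_V m n" "v \<in> grid_V m n" "u \<noteq> v" for u v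
    using that unfolding landmark_set_def by blast
  have "ne_sw_cover m n X"
    unfolding ne_sw_cover_def
    using sep[of "(i, Suc j)" "(Suc i, j)" for i j] by (auto simp: separates_antidiagonal_pair)
  moreover have "nw_se_cover m n X"
    unfolding nw_se_cover_def
    using sep[of "(i, j)" "(Suc i, Suc j)" for i j] by (auto simp: separates_diagonal_pair)
  moreover have "\<not> within_interior_row m X"
  proof
    assume "within_interior_row m X"
    then obtain r where r: "1 < r" "r < m" "\<forall>x\<in>X. fst x = r"
      unfolding within_interior_row_def by blast
    moreover have "(r - 1, 1) \<in> grid_V m n" "(r + 1, 1) \<in> grid_V m n" "(r - 1, 1) \<noteq> (r + 1, 1::nat)"
      using r assms by auto
    ultimately obtain x where "x \<in> X" "separates x (r - 1, 1) (r + 1, 1)"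
      using sep by blast
    with r separates_vertical_neighbours[of r x 1] show False by simp
  qed
  moreover have "\<not> within_interior_column n X"
  proof
    assume "within_interior_column n X"
    then obtain c where c: "1 < c" "c < n" "\<forall>x\<in>X. snd x = c"
      unfolding within_interior_column_def by blast
    moreover have "(1, c - 1) \<in> grid_V m n" "(1, c + 1) \<in> grid_V m n" "(1::nat, c - 1) \<noteq> (1, c + 1)"
      using c assms by auto
    ultimately obtain x where "x \<in> X" "separates x (1, c - 1) (1, c + 1)"
      using sep by blast
    with c separates_horizontal_neighbours[of c x 1] show False by simp
  qed
  ultimately show "X \<subseteq> grid_V m n \<and> ne_sw_cover m n X \<and> nw_se_cover m n X \<and>
      \<not> within_interior_row m X \<and> \<not> within_interior_column n X"
    using L unfolding landmark_set_def by blast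
next
  assume X: "X \<subseteq> grid_V m n \<and> ne_sw_cover m n X \<and> nw_se_cover m n X \<and>
      \<not> within_interior_row m X \<and> \<not> within_interior_column n X"
  then have "X \<noteq> {}"
    using assms unfolding ne_sw_cover_def by (elim conjE allE[of _ 1]) auto
  have "\<exists>x\<in>X. separates x u v" if "u \<in> grid_V m n" "v \<in> grid_V m n" "u \<noteq> v" for u v
  proof -
    obtain i1 j1 i2 j2 where uv: "u = (i1, j1)" "v = (i2, j2)" by fastforce
    consider "i1 < i2" | "i2 < i1" | "i1 = i2" "j1 < j2" | "i1 = i2" "j2 < j1"
      using \<open>u \<noteq> v\<close> uv by fastforce
    then show ?thesis
      using that X \<open>X \<noteq> {}\<close> separator_for_distinct_rows[OF assms] separator_for_same_row
      unfolding uv by cases (metis separates_commute)+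
  qed
  with X show "landmark_set m n X" unfolding landmark_set_def by blast
qed

section \<open>Antidiagonal paths\<close>

definition weakly_sw :: "vertex \<Rightarrow> vertex \<Rightarrow> bool" where
  "weakly_sw x y \<longleftrightarrow> fst x \<le> fst y \<and> snd y \<le> snd x"

definition strictly_nw :: "vertex \<Rightarrow> vertex \<Rightarrow> bool" where
  "strictly_nw x y \<longleftrightarrow> fst x < fst y \<and> snd x < snd y"

definition antidiagonal :: "vertex \<Rightarrow> vertex \<Rightarrow> bool" where
  "antidiagonal x y \<longleftrightarrow> weakly_sw x y \<or> weakly_sw y x"

lemma antidiagonal_iff_incomparable:
  "antidiagonal x y \<longleftrightarrow> \<not> strictly_nw x y \<and> \<not> strictly_nw y x"
  by (auto simp: antidiagonal_def weakly_sw_def strictly_nw_def)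

lemma strictly_nw_trans: "strictly_nw x y \<Longrightarrow> strictly_nw y z \<Longrightarrow> strictly_nw x z"
  by (auto simp: strictly_nw_def)

lemma landmark_set_of_antidiagonal_path:
  assumes "2 \<le> m" "2 \<le> n" and grid: "\<forall>k\<in>{lo..hi}. g k \<in> grid_V m n" and "lo \<le> hi"
    and top: "fst (g lo) = 1" and bottom: "fst (g hi) = m" and "snd (g lo) \<le> snd (g hi)"
    and steps: "\<And>k. lo \<le> k \<Longrightarrow> k < hi \<Longrightarrow> antidiagonal (g k) (g (Suc k))"
    and "\<not> within_interior_column n (g ` {lo..hi})"
  shows "landmark_set m n (g ` {lo..hi})"
  unfolding landmark_set_iff[OF assms(1,2)]
proof (intro conjI)
  show "g ` {lo..hi} \<subseteq> grid_V m n" using grid by auto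
  show "ne_sw_cover m n (g ` {lo..hi})"
    unfolding ne_sw_cover_def
  proof (intro allI impI)
    fix i j assume ij: "1 \<le> i" "i < m" "1 \<le> j" "j < n"
    show "\<exists>x\<in>g ` {lo..hi}. (fst x \<le> i \<and> j < snd x) \<or> (i < fst x \<and> snd x \<le> j)"
    proof (rule ccontr)
      assume "\<not> ?thesis"
      then have quadrants: "(fst (g k) \<le> i \<and> snd (g k) \<le> j) \<or> (i < fst (g k) \<and> j < snd (g k))"
        if "lo \<le> k" "k \<le> hi" for k
        using that by force
      text \<open>An antidiagonal step cannot jump from the north-west to the south-east quadrant.\<close>
      have "fst (g hi) \<le> i \<and> snd (g hi) \<le> j"
        using \<open>lo \<le> hi\<close>
      proof (induction rule: dec_induct)
        case base
        then show ?case using quadrants[of lo] top ij \<open>lo \<le> hi\<close> by auto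
      next
        case (step k)
        then show ?case
          using quadrants[of "Suc k"] steps[of k]
          by (auto simp: antidiagonal_iff_incomparable strictly_nw_def)
      qed
      with bottom ij show False by simp
    qed
  qed
  show "nw_se_cover m n (g ` {lo..hi})"
    unfolding nw_se_cover_def
  proof (intro allI impI)
    fix i j assume ij: "1 \<le> i" "i < m" "1 \<le> j" "j < n"
    have "g lo \<in> g ` {lo..hi}" "g hi \<in> g ` {lo..hi}" using \<open>lo \<le> hi\<close> by auto
    then show "\<exists>x\<in>g ` {lo..hi}. (fst x \<le> i \<and> snd x \<le> j) \<or> (i < fst x \<and> j < snd x)"
      using top bottom ij \<open>snd (g lo) \<le> snd (g hi)\<close> by (cases "snd (g lo) \<le> j") auto
  qed
  have "g lo \<in> g ` {lo..hi}" using \<open>lo \<le> hi\<close> by auto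
  then show "\<not> within_interior_row m (g ` {lo..hi})"
    using top by (rule not_within_interior_rowI)
qed fact

lemma landmark_set_of_corresponding:
  assumes "2 \<le> m" "2 \<le> n" and Z: "zigzag m n k q" and T: "corresponds m n k q t"
  shows "landmark_set m n (t ` {1..2*k})"
proof -
  have "2 \<le> k" using Z by (simp add: zigzag_def)
  have zig: "(even i \<longrightarrow> snd (q i) = snd (q (i-1)) \<and> fst (q (i-1)) < fst (q i)) \<and>
      (odd i \<longrightarrow> fst (q i) = fst (q (i-1)) \<and> snd (q (i-1)) < snd (q i))" if "2 \<le> i" "i \<le> 2*k" for i
    using Z that unfolding zigzag_def by auto
  have even_t: "fst (t i) = fst (q i) \<and> snd (t i) \<le> snd (q i)" if "even i" "1 \<le> i" "i \<le> 2*k" for i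
    using T that unfolding corresponds_def by (auto elim!: evenE)
  have odd_t: "fst (t i) \<le> fst (q i) \<and> snd (t i) = snd (q i)" if "odd i" "1 \<le> i" "i \<le> 2*k" for i
    using T that unfolding corresponds_def by (cases "i = 1") auto
  have steps: "antidiagonal (t i) (t (Suc i))" if "1 \<le> i" "i < 2*k" for i
  proof (cases "odd i")
    case True
    then have "weakly_sw (t i) (t (Suc i))"
      using odd_t[of i] even_t[of "Suc i"] zig[of "Suc i"] that by (auto simp: weakly_sw_def)
    then show ?thesis by (simp add: antidiagonal_def)
  next
    case False
    then have "weakly_sw (t (Suc i)) (t i)"
      using even_t[of i] odd_t[of "Suc i"] zig[of "Suc i"] that by (auto simp: weakly_sw_def)
    then show ?thesis by (simp add: antidiagonal_def)
  qed
  have "snd (t 1) < snd (t (2*k))" using T unfolding corresponds_def by blast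
  moreover have "1 \<in> {1..2*k}" "2*k \<in> {1..2*k}" using \<open>2 \<le> k\<close> by auto
  ultimately have "\<not> within_interior_column n (t ` {1..2*k})"
    by (intro not_within_interior_columnI[of "t 1" _ "t (2*k)"]) auto
  moreover have "fst (t 1) = 1" "fst (t (2*k)) = m"
    using Z T even_t[of "2*k"] \<open>2 \<le> k\<close> by (auto simp: zigzag_def corresponds_def)
  ultimately show ?thesis
    using T \<open>2 \<le> k\<close> \<open>snd (t 1) < snd (t (2*k))\<close> steps
    by (intro landmark_set_of_antidiagonal_path[OF assms(1,2)]) (auto simp: corresponds_def)
qed

section \<open>Minimal landmark sets are zigzags\<close>

lemma relpowp_path_segment:
  assumes "\<And>k. k < N \<Longrightarrow> R (f k) (f (Suc k))" "i \<le> j" "j \<le> N"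
  shows "(R ^^ (j - i)) (f i) (f j)"
  unfolding relpowp_fun_conv
  using assms by (intro exI[of _ "\<lambda>k. f (i + k)"]) auto

lemma shortest_path:
  assumes "R\<^sup>*\<^sup>* u w"
  obtains f N where "f 0 = u" "f N = w" "\<And>k. k < N \<Longrightarrow> R (f k) (f (Suc k))"
    "inj_on f {0..N}" "\<And>i j. i + 2 \<le> j \<Longrightarrow> j \<le> N \<Longrightarrow> \<not> R (f i) (f j)"
proof -
  define N where "N = (LEAST N. (R ^^ N) u w)"
  have "\<exists>N. (R ^^ N) u w" using assms by (rule rtranclp_imp_relpowp)
  then have "(R ^^ N) u w" and least: "\<And>N'. (R ^^ N') u w \<Longrightarrow> N \<le> N'"
    unfolding N_def by (auto intro: LeastI_ex Least_le)
  then obtain f where f: "f 0 = u" "f N = w" "\<And>k. k < N \<Longrightarrow> R (f k) (f (Suc k))"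
    unfolding relpowp_fun_conv by blast
  have seg: "(R ^^ (j - i)) (f i) (f j)" if "i \<le> j" "j \<le> N" for i j
    using f(3) that by (rule relpowp_path_segment)
  have "f i \<noteq> f j" if "i < j" "j \<le> N" for i j
  proof
    assume "f i = f j"
    then have "(R ^^ (i + (N - j))) u w"
      unfolding relpowp_add using seg[of 0 i] seg[of j N] that f(1,2) by auto
    with least that show False by fastforce
  qed
  then have "inj_on f {0..N}"
    by (metis atLeastAtMost_iff inj_onI linorder_neqE_nat)
  moreover have "\<not> R (f i) (f j)" if "i + 2 \<le> j" "j \<le> N" for i j
  proof
    assume "R (f i) (f j)"
    then have "(R ^^ (i + (1 + (N - j)))) u w"
      unfolding relpowp_add relpowp_1 using seg[of 0 i] seg[of j N] that f(1,2) by auto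
    with least that show False by fastforce
  qed
  ultimately show ?thesis using f that by blast
qed

definition antidiagonal_on :: "vertex set \<Rightarrow> vertex \<Rightarrow> vertex \<Rightarrow> bool" where
  "antidiagonal_on X x y \<longleftrightarrow> x \<in> X \<and> y \<in> X \<and> antidiagonal x y"

text \<open>If w were not reachable, every vertex reachable from u would lie strictly north-west of every
  other vertex of X; the cut at the south-east corner of the reachable part then meets neither quadrant.\<close>
lemma antidiagonal_reachable:
  assumes X: "X \<subseteq> grid_V m n" and cover: "ne_sw_cover m n X"
    and u: "u \<in> X" "fst u = 1" and w: "w \<in> X" "fst w = m"
  shows "(antidiagonal_on X)\<^sup>*\<^sup>* u w"
proof (rule ccontr)
  assume unreachable: "\<not> ?thesis"
  define C where "C = {x \<in> X. (antidiagonal_on X)\<^sup>*\<^sup>* u x}"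
  have in_grid: "1 \<le> fst x \<and> fst x \<le> m \<and> 1 \<le> snd x \<and> snd x \<le> n" if "x \<in> X" for x
    using X that by (auto simp: grid_V_def)
  have sep: "strictly_nw c d" if "d \<in> X" "d \<notin> C" "c \<in> C" for c d
  proof -
    have "(antidiagonal_on X)\<^sup>*\<^sup>* u c" using \<open>c \<in> C\<close> by (simp add: C_def)
    then show ?thesis
    proof (induction rule: rtranclp_induct)
      case base
      have "\<not> antidiagonal u d"
        using that u by (auto simp: C_def antidiagonal_on_def)
      then show ?case
        using u in_grid[OF \<open>d \<in> X\<close>] by (auto simp: antidiagonal_iff_incomparable strictly_nw_def)
    next
      case (step y z)
      then have "(antidiagonal_on X)\<^sup>*\<^sup>* u z" by simp
      then have "\<not> antidiagonal z d"
        using that step.hyps(2) rtranclp.rtrancl_into_rtrancl[of _ u z d]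
        by (auto simp: C_def antidiagonal_on_def)
      moreover have "\<not> strictly_nw d z"
        using step.IH step.hyps(2) strictly_nw_trans[of y d z]
        by (auto simp: antidiagonal_on_def antidiagonal_iff_incomparable)
      ultimately show ?case by (auto simp: antidiagonal_iff_incomparable)
    qed
  qed
  have "u \<in> C" using u by (simp add: C_def)
  have "w \<notin> C" using unreachable by (simp add: C_def)
  have "finite C" using finite_subset[OF X finite_grid_V] by (simp add: C_def)
  define i where "i = Max (fst ` C)"
  define j where "j = Max (snd ` C)"
  have "i \<in> fst ` C" "j \<in> snd ` C"
    using \<open>finite C\<close> \<open>u \<in> C\<close> unfolding i_def j_def by (auto intro!: Max_in)
  then obtain ci cj where "ci \<in> C" "fst ci = i" "cj \<in> C" "snd cj = j" by force
  have below: "fst c \<le> i" "snd c \<le> j" if "c \<in> C" for c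
    using \<open>finite C\<close> that by (auto simp: i_def j_def)
  have "1 \<le> i" "1 \<le> j" using below[OF \<open>u \<in> C\<close>] in_grid[OF \<open>u \<in> X\<close>] by auto
  moreover have "i < m" "j < n"
    using sep[OF w(1) \<open>w \<notin> C\<close>] \<open>ci \<in> C\<close> \<open>cj \<in> C\<close> \<open>fst ci = i\<close> \<open>snd cj = j\<close> in_grid[OF w(1)]
    by (fastforce simp: strictly_nw_def)+
  ultimately obtain x where x: "x \<in> X" "(fst x \<le> i \<and> j < snd x) \<or> (i < fst x \<and> snd x \<le> j)"
    using cover unfolding ne_sw_cover_def by blast
  show False
  proof (cases "x \<in> C")
    case True
    with x below show False by fastforce
  next
    case False
    then have "strictly_nw ci x" "strictly_nw cj x"
      using sep x(1) \<open>ci \<in> C\<close> \<open>cj \<in> C\<close> by auto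
    with x \<open>fst ci = i\<close> \<open>snd cj = j\<close> show False by (auto simp: strictly_nw_def)
  qed
qed

lemma landmark_set_column_ends:
  assumes "2 \<le> m" "2 \<le> n" "{u, w, z} \<subseteq> grid_V m n"
    and "fst u = 1" "fst w = m" "snd u = snd w" "snd z \<noteq> snd u"
  shows "landmark_set m n {u, w, z}"
  unfolding landmark_set_iff[OF assms(1,2)]
proof (intro conjI)
  show "ne_sw_cover m n {u, w, z}" "nw_se_cover m n {u, w, z}"
    using assms(4-6) unfolding ne_sw_cover_def nw_se_cover_def by (metis insertI1 insertI2 not_le)+
  show "\<not> within_interior_row m {u, w, z}"
    using assms(4) by (intro not_within_interior_rowI[of u]) auto
  show "\<not> within_interior_column n {u, w, z}"
    using assms(7) by (intro not_within_interior_columnI[of u _ z]) auto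
qed (use assms in auto)

lemma minimal_landmark_set_eq_path:
  assumes "2 \<le> m" "2 \<le> n" and min: "minimal_landmark_set m n X" and "4 \<le> card X"
    and sub: "g ` {lo..hi} \<subseteq> X" and "lo \<le> hi"
    and top: "fst (g lo) = 1" and bottom: "fst (g hi) = m" and "snd (g lo) \<le> snd (g hi)"
    and steps: "\<And>k. lo \<le> k \<Longrightarrow> k < hi \<Longrightarrow> antidiagonal (g k) (g (Suc k))"
  shows "g ` {lo..hi} = X"
proof -
  have "landmark_set m n X" and no_smaller: "\<And>Y. Y \<subset> X \<Longrightarrow> \<not> landmark_set m n Y"
    using min by (auto simp: minimal_landmark_set_def)
  then have X: "X \<subseteq> grid_V m n" "\<not> within_interior_column n X"
    using landmark_set_iff[OF assms(1,2)] by blast+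
  show ?thesis
  proof (cases "within_interior_column n (g ` {lo..hi})")
    case True
    text \<open>Then both ends lie in one column, and any vertex of X off that column completes a
      landmark set of three vertices.\<close>
    have ends: "g lo \<in> g ` {lo..hi}" "g hi \<in> g ` {lo..hi}" using \<open>lo \<le> hi\<close> by auto
    with True have same: "snd (g lo) = snd (g hi)"
      by (auto simp: within_interior_column_def)
    obtain z where "z \<in> X" "snd z \<noteq> snd (g lo)"
      using X(2) ends sub True by (auto simp: within_interior_column_def)
    then have "landmark_set m n {g lo, g hi, z}"
      using ends sub X(1) top bottom same
      by (intro landmark_set_column_ends[OF assms(1,2)]) auto
    moreover have "{g lo, g hi, z} \<subset> X"
    proof -
      have "card {g lo, g hi, z} \<le> 3" by (auto simp: card_insert_if)
      then have "{g lo, g hi, z} \<noteq> X" using \<open>4 \<le> card X\<close> by auto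
      then show ?thesis using ends sub \<open>z \<in> X\<close> by blast
    qed
    ultimately show ?thesis using no_smaller by blast
  next
    case False
    then have "landmark_set m n (g ` {lo..hi})"
      using sub X(1) assms(6-10)
      by (intro landmark_set_of_antidiagonal_path[OF assms(1,2)]) auto
    with sub no_smaller show ?thesis by blast
  qed
qed

lemma strictly_nw_along_shortcut_free_path:
  assumes steps: "\<And>k. k < N \<Longrightarrow> antidiagonal (f k) (f (Suc k))"
    and no_shortcut: "\<And>i j. i + 2 \<le> j \<Longrightarrow> j \<le> N \<Longrightarrow> \<not> antidiagonal (f i) (f j)"
    and start: "\<And>j. j \<le> N \<Longrightarrow> \<not> strictly_nw (f j) (f 0)"
  shows "i + 2 \<le> j \<Longrightarrow> j \<le> N \<Longrightarrow> strictly_nw (f i) (f j)"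
proof (induction i arbitrary: j)
  case 0
  then show ?case using no_shortcut[of 0 j] start[of j] by (auto simp: antidiagonal_iff_incomparable)
next
  case (Suc i)
  have "strictly_nw (f i) (f j)" using Suc by simp
  then have "\<not> strictly_nw (f j) (f (Suc i))"
    using steps[of i] Suc.prems strictly_nw_trans[of "f i" "f j" "f (Suc i)"]
    by (auto simp: antidiagonal_iff_incomparable)
  then show ?case
    using no_shortcut[of "Suc i" j] Suc.prems by (auto simp: antidiagonal_iff_incomparable)
qed

text \<open>Two consecutive steps in the same direction would contradict the strict north-west order
  of f k and f (k + 2), so the steps alternate.\<close>
lemma alternating_steps:
  assumes steps: "\<And>k. k < N \<Longrightarrow> antidiagonal (f k) (f (Suc k))"
    and nw: "\<And>k. k + 2 \<le> N \<Longrightarrow> strictly_nw (f k) (f (k + 2))"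
    and first: "weakly_sw (f 0) (f 1)"
  shows "k < N \<Longrightarrow> (if even k then weakly_sw (f k) (f (Suc k)) else weakly_sw (f (Suc k)) (f k))"
proof (induction k)
  case 0
  then show ?case using first by simp
next
  case (Suc k)
  then show ?case
    using steps[of "Suc k"] nw[of k]
    by (auto simp: antidiagonal_def weakly_sw_def strictly_nw_def split: if_splits)
qed

text \<open>The zigzag through a path turns at the corners of the rectangles spanned by consecutive
  path vertices f j and f (j + 1).\<close>
fun zigzag_corner :: "(nat \<Rightarrow> vertex) \<Rightarrow> nat \<Rightarrow> vertex" where
  "zigzag_corner f (Suc 0) = f 0"
| "zigzag_corner f (Suc (Suc j)) =
     (if even j then (fst (f (Suc j)), snd (f j)) else (fst (f j), snd (f (Suc j))))"

lemma zigzag_of_alternating_path: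
  assumes "2 \<le> K" and grid: "\<And>k. k < 2*K \<Longrightarrow> f k \<in> grid_V m n"
    and top: "fst (f 0) = 1" and bottom: "fst (f (2*K - 1)) = m" and second: "1 < fst (f 1)"
    and nw: "\<And>i j. i + 2 \<le> j \<Longrightarrow> j < 2*K \<Longrightarrow> strictly_nw (f i) (f j)"
    and alt: "\<And>k. Suc k < 2*K \<Longrightarrow>
      (if even k then weakly_sw (f k) (f (Suc k)) else weakly_sw (f (Suc k)) (f k))"
  shows "zigzag m n K (zigzag_corner f) \<and> corresponds m n K (zigzag_corner f) (\<lambda>i. f (i - 1))"
proof -
  let ?q = "zigzag_corner f"
  have q_grid: "?q i \<in> grid_V m n" if "1 \<le> i" "i \<le> 2*K" for i
  proof (cases "i = 1")
    case False
    then have "2 \<le> i" using that by simp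
    then obtain j where "i = Suc (Suc j)" by (metis add_2_eq_Suc le_Suc_ex)
    then show ?thesis
      using grid[of j] grid[of "Suc j"] that by (auto simp: grid_V_iff)
  qed (use grid that in auto)
  have zig: "(even i \<longrightarrow> snd (?q i) = snd (?q (i-1)) \<and> fst (?q i) > fst (?q (i-1))) \<and>
      (odd i \<longrightarrow> fst (?q i) = fst (?q (i-1)) \<and> snd (?q i) > snd (?q (i-1)))"
    if "2 \<le> i" "i \<le> 2*K" for i
  proof -
    obtain j where j: "i = Suc (Suc j)" using \<open>2 \<le> i\<close> by (metis add_2_eq_Suc le_Suc_ex)
    show ?thesis
    proof (cases j)
      case 0
      then show ?thesis using j second top by simp
    next
      case (Suc j')
      then have "strictly_nw (f j') (f (Suc j))" using nw[of j' "Suc j"] j that by simp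
      then show ?thesis
        using j Suc by (auto simp: strictly_nw_def)
    qed
  qed
  have corr: "(even i \<longrightarrow> fst (f (i - 1)) = fst (?q i) \<and> snd (f (i - 1)) \<le> snd (?q i)) \<and>
      (odd i \<longrightarrow> snd (f (i - 1)) = snd (?q i) \<and> fst (f (i - 1)) \<le> fst (?q i))"
    if "2 \<le> i" "i \<le> 2*K" for i
  proof -
    obtain j where j: "i = Suc (Suc j)" using \<open>2 \<le> i\<close> by (metis add_2_eq_Suc le_Suc_ex)
    then show ?thesis using alt[of j] that by (auto simp: weakly_sw_def)
  qed
  have "snd (f 0) < snd (f (2*K - 1))" using nw[of 0 "2*K - 1"] \<open>2 \<le> K\<close> by (simp add: strictly_nw_def)
  moreover have "fst (?q (2*K)) = m"
  proof -
    have "2*K = Suc (Suc (2*K - 2))" "even (2*K - 2)" using \<open>2 \<le> K\<close> by auto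
    then show ?thesis using bottom by (metis zigzag_corner.simps(2) diff_Suc_1 fst_conv)
  qed
  ultimately show ?thesis
    using \<open>2 \<le> K\<close> q_grid zig corr grid top
    by (auto simp: zigzag_def corresponds_def)
qed

lemma minimal_landmark_set_path:
  assumes mn: "2 \<le> m" "2 \<le> n" and min: "minimal_landmark_set m n X" and "4 \<le> card X"
    and u: "u \<in> X" "fst u = 1" and w: "w \<in> X" "fst w = m" and "snd u \<le> snd w"
  obtains f N where "f 0 = u" "f N = w" "f ` {0..N} = X" "inj_on f {0..N}" "3 \<le> N"
    "\<And>k. k < N \<Longrightarrow> antidiagonal (f k) (f (Suc k))"
    "\<And>i j. i + 2 \<le> j \<Longrightarrow> j \<le> N \<Longrightarrow> strictly_nw (f i) (f j)"
proof -
  have "landmark_set m n X" using min by (simp add: minimal_landmark_set_def)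
  then have X: "X \<subseteq> grid_V m n" "ne_sw_cover m n X" using landmark_set_iff[OF mn] by blast+
  obtain f N where f0: "f 0 = u" and fN: "f N = w"
    and steps_on: "\<And>k. k < N \<Longrightarrow> antidiagonal_on X (f k) (f (Suc k))" and "inj_on f {0..N}"
    and no_shortcut_on: "\<And>i j. i + 2 \<le> j \<Longrightarrow> j \<le> N \<Longrightarrow> \<not> antidiagonal_on X (f i) (f j)"
    using shortest_path[OF antidiagonal_reachable[OF X u w]] by blast
  have fX: "f k \<in> X" if "k \<le> N" for k
    using that steps_on[of k] f0 fN u w by (cases "k = N") (auto simp: antidiagonal_on_def)
  have steps: "antidiagonal (f k) (f (Suc k))" if "k < N" for k
    using steps_on[OF that] by (simp add: antidiagonal_on_def)
  have no_shortcut: "\<not> antidiagonal (f i) (f j)" if "i + 2 \<le> j" "j \<le> N" for i j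
    using no_shortcut_on[OF that] fX that by (simp add: antidiagonal_on_def)
  have "f ` {0..N} = X"
    using f0 fN u w fX steps \<open>snd u \<le> snd w\<close>
    by (intro minimal_landmark_set_eq_path[OF mn min \<open>4 \<le> card X\<close>]) auto
  then have "card X = N + 1" using card_image[OF \<open>inj_on f {0..N}\<close>] by simp
  then have "3 \<le> N" using \<open>4 \<le> card X\<close> by simp
  have "\<not> strictly_nw (f j) (f 0)" if "j \<le> N" for j
    using f0 u fX[OF that] X(1) by (auto simp: strictly_nw_def grid_V_iff)
  then have "strictly_nw (f i) (f j)" if "i + 2 \<le> j" "j \<le> N" for i j
    using strictly_nw_along_shortcut_free_path[of N f, OF steps no_shortcut] that by blast
  with f0 fN \<open>f ` {0..N} = X\<close> \<open>inj_on f {0..N}\<close> \<open>3 \<le> N\<close> steps show ?thesis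
    by (rule that)
qed

text \<open>By minimality neither end vertex can be dropped from the path.\<close>
lemma minimal_landmark_set_path_ends:
  assumes mn: "2 \<le> m" "2 \<le> n" and min: "minimal_landmark_set m n X" and "4 \<le> card X"
    and path: "f ` {0..N} = X" "inj_on f {0..N}" "3 \<le> N"
    and top: "fst (f 0) = 1" and bottom: "fst (f N) = m"
    and steps: "\<And>k. k < N \<Longrightarrow> antidiagonal (f k) (f (Suc k))"
    and nw: "\<And>i j. i + 2 \<le> j \<Longrightarrow> j \<le> N \<Longrightarrow> strictly_nw (f i) (f j)"
  shows "1 < fst (f 1)" "fst (f (N - 1)) < m"
proof -
  have in_grid: "f k \<in> grid_V m n" if "k \<le> N" for k
    using min path(1) that by (auto simp: minimal_landmark_set_def landmark_set_def)
  have path_eq: "f ` {lo..hi} = X"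
    if "lo \<le> hi" "hi \<le> N" "fst (f lo) = 1" "fst (f hi) = m" "snd (f lo) \<le> snd (f hi)" for lo hi
    using that path(1) steps
    by (intro minimal_landmark_set_eq_path[OF mn min \<open>4 \<le> card X\<close>]) auto
  show "1 < fst (f 1)"
  proof (rule ccontr)
    assume "\<not> 1 < fst (f 1)"
    moreover have "snd (f 1) < snd (f N)" using nw[of 1 N] \<open>3 \<le> N\<close> by (simp add: strictly_nw_def)
    ultimately have "f ` {1..N} = X"
      using path_eq[of 1 N] in_grid[of 1] bottom \<open>3 \<le> N\<close> by (simp add: grid_V_iff)
    moreover have "f 0 \<in> X" using path(1) by auto
    ultimately obtain k where "k \<in> {1..N}" "f k = f 0" by (metis imageE)
    with inj_onD[OF path(2), of k 0] show False by auto
  qed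
  show "fst (f (N - 1)) < m"
  proof (rule ccontr)
    assume "\<not> fst (f (N - 1)) < m"
    moreover have "snd (f 0) < snd (f (N - 1))"
      using nw[of 0 "N - 1"] \<open>3 \<le> N\<close> by (simp add: strictly_nw_def)
    ultimately have "f ` {0..N - 1} = X"
      using path_eq[of 0 "N - 1"] in_grid[of "N - 1"] top by (simp add: grid_V_iff)
    moreover have "f N \<in> X" using path(1) by auto
    ultimately obtain k where "k \<in> {0..N - 1}" "f k = f N" by (metis imageE)
    with inj_onD[OF path(2), of k N] \<open>3 \<le> N\<close> show False by fastforce
  qed
qed

lemma minimal_landmark_set_zigzag:
  assumes mn: "2 \<le> m" "2 \<le> n" and min: "minimal_landmark_set m n X" and "4 \<le> card X"
    and u: "u \<in> X" "fst u = 1" and w: "w \<in> X" "fst w = m" and "snd u \<le> snd w"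
  shows "\<exists>K q t. zigzag m n K q \<and> corresponds m n K q t \<and> inj_on t {1..2*K} \<and> t ` {1..2*K} = X"
proof -
  obtain f N where f0: "f 0 = u" and fN: "f N = w" and path: "f ` {0..N} = X" "inj_on f {0..N}" "3 \<le> N"
    and steps: "\<And>k. k < N \<Longrightarrow> antidiagonal (f k) (f (Suc k))"
    and nw: "\<And>i j. i + 2 \<le> j \<Longrightarrow> j \<le> N \<Longrightarrow> strictly_nw (f i) (f j)"
    using minimal_landmark_set_path[OF assms] by blast
  have ends: "1 < fst (f 1)" "fst (f (N - 1)) < m"
    using minimal_landmark_set_path_ends[OF mn min \<open>4 \<le> card X\<close> path _ _ steps nw] f0 fN u w by auto
  then have "weakly_sw (f 0) (f 1)"
    using steps[of 0] f0 u \<open>3 \<le> N\<close> by (auto simp: antidiagonal_def weakly_sw_def)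
  then have alt: "if even k then weakly_sw (f k) (f (Suc k)) else weakly_sw (f (Suc k)) (f k)"
    if "k < N" for k
    using alternating_steps[of N f, OF steps _ _ that] nw by simp
  have "odd N"
  proof
    assume "even N"
    then have "weakly_sw (f N) (f (N - 1))" using alt[of "N - 1"] \<open>3 \<le> N\<close> by simp
    with ends(2) fN w show False by (simp add: weakly_sw_def)
  qed
  define K where "K = (N + 1) div 2"
  have K: "2*K = N + 1" "2 \<le> K" using \<open>odd N\<close> \<open>3 \<le> N\<close> by (auto simp: K_def)
  have "f k \<in> grid_V m n" if "k \<le> N" for k
    using min path(1) that by (auto simp: minimal_landmark_set_def landmark_set_def)
  then have "zigzag m n K (zigzag_corner f) \<and> corresponds m n K (zigzag_corner f) (\<lambda>i. f (i - 1))"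
    using K f0 fN u w ends(1) nw alt
    by (intro zigzag_of_alternating_path) auto
  moreover have shift: "(\<lambda>i. i - 1) ` {1..2*K} = {0..N}"
    using K by (auto simp: image_iff intro!: bexI[of _ "Suc _"])
  have "inj_on (f \<circ> (\<lambda>i. i - 1)) {1..2*K}"
    using path(2) by (intro comp_inj_on inj_on_diff_nat) (simp_all only: shift, auto)
  moreover have "(f \<circ> (\<lambda>i. i - 1)) ` {1..2*K} = X"
    unfolding image_comp[symmetric] shift by (rule path(1))
  ultimately show ?thesis unfolding comp_def by blast
qed

section \<open>Symmetries of the grid\<close>

lemma grid_sym_in_grid_V:
  "v \<in> grid_V m n \<Longrightarrow> grid_sym s m n v \<in> grid_V (fst (grid_sym_dims s m n)) (snd (grid_sym_dims s m n))"
  by (cases s; cases v) (auto simp: grid_sym_def grid_sym_dims_def Let_def)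

lemma grid_sym_inv_in_grid_V:
  "w \<in> grid_V (fst (grid_sym_dims s m n)) (snd (grid_sym_dims s m n)) \<Longrightarrow> grid_sym_inv s m n w \<in> grid_V m n"
  by (cases s; cases w) (auto simp: grid_sym_inv_def grid_sym_dims_def Let_def)

lemma grid_sym_inv_grid_sym: "v \<in> grid_V m n \<Longrightarrow> grid_sym_inv s m n (grid_sym s m n v) = v"
  by (cases s; cases v) (auto simp: grid_sym_def grid_sym_inv_def Let_def)

lemma grid_sym_grid_sym_inv:
  "w \<in> grid_V (fst (grid_sym_dims s m n)) (snd (grid_sym_dims s m n)) \<Longrightarrow> grid_sym s m n (grid_sym_inv s m n w) = w"
  by (cases s; cases w) (auto simp: grid_sym_def grid_sym_inv_def grid_sym_dims_def Let_def)

lemma grid_dist_grid_sym: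
  "u \<in> grid_V m n \<Longrightarrow> v \<in> grid_V m n \<Longrightarrow> grid_dist (grid_sym s m n u) (grid_sym s m n v) = grid_dist u v"
  by (cases s; cases u; cases v) (auto simp: grid_sym_def grid_dist_def Let_def)

lemma landmark_set_isometric_image:
  assumes onto: "\<phi> ` grid_V m n = grid_V m' n'"
    and iso: "\<And>u v. u \<in> grid_V m n \<Longrightarrow> v \<in> grid_V m n \<Longrightarrow> grid_dist (\<phi> u) (\<phi> v) = grid_dist u v"
    and L: "landmark_set m n X"
  shows "landmark_set m' n' (\<phi> ` X)"
  unfolding landmark_set_def
proof (intro conjI ballI impI)
  have X: "X \<subseteq> grid_V m n" using L by (simp add: landmark_set_def)
  then show "\<phi> ` X \<subseteq> grid_V m' n'" using onto by blast
  fix u' v' assume "u' \<in> grid_V m' n'" "v' \<in> grid_V m' n'" "u' \<noteq> v'"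
  then obtain u v where uv: "u \<in> grid_V m n" "v \<in> grid_V m n" "u' = \<phi> u" "v' = \<phi> v" "u \<noteq> v"
    using onto by (metis imageE)
  then obtain x where "x \<in> X" "separates x u v" using L unfolding landmark_set_def by blast
  then have "separates (\<phi> x) u' v'"
    using X uv iso[of x u] iso[of x v] by (auto simp: separates_def)
  with \<open>x \<in> X\<close> show "\<exists>y\<in>\<phi> ` X. separates y u' v'" by blast
qed

lemma grid_sym_image_grid_V:
  "grid_sym s m n ` grid_V m n = grid_V (fst (grid_sym_dims s m n)) (snd (grid_sym_dims s m n))"
proof
  show "grid_sym s m n ` grid_V m n \<subseteq> grid_V (fst (grid_sym_dims s m n)) (snd (grid_sym_dims s m n))"
    using grid_sym_in_grid_V by blast
  show "grid_V (fst (grid_sym_dims s m n)) (snd (grid_sym_dims s m n)) \<subseteq> grid_sym s m n ` grid_V m n"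
  proof
    fix w assume "w \<in> grid_V (fst (grid_sym_dims s m n)) (snd (grid_sym_dims s m n))"
    then show "w \<in> grid_sym s m n ` grid_V m n"
      using grid_sym_grid_sym_inv grid_sym_inv_in_grid_V by (metis image_eqI)
  qed
qed

lemma grid_sym_inv_image_grid_V:
  "grid_sym_inv s m n ` grid_V (fst (grid_sym_dims s m n)) (snd (grid_sym_dims s m n)) = grid_V m n"
proof
  show "grid_sym_inv s m n ` grid_V (fst (grid_sym_dims s m n)) (snd (grid_sym_dims s m n)) \<subseteq> grid_V m n"
    using grid_sym_inv_in_grid_V by blast
  show "grid_V m n \<subseteq> grid_sym_inv s m n ` grid_V (fst (grid_sym_dims s m n)) (snd (grid_sym_dims s m n))"
  proof
    fix v assume "v \<in> grid_V m n"
    then show "v \<in> grid_sym_inv s m n ` grid_V (fst (grid_sym_dims s m n)) (snd (grid_sym_dims s m n))"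
      using grid_sym_inv_grid_sym grid_sym_in_grid_V by (metis image_eqI)
  qed
qed

lemma grid_sym_inv_image_grid_sym_image:
  "X \<subseteq> grid_V m n \<Longrightarrow> grid_sym_inv s m n ` grid_sym s m n ` X = X"
proof -
  assume "X \<subseteq> grid_V m n"
  then have "grid_sym_inv s m n ` grid_sym s m n ` X = (\<lambda>x. x) ` X"
    unfolding image_image by (intro image_cong) (auto intro: grid_sym_inv_grid_sym)
  then show ?thesis by simp
qed

lemma landmark_set_grid_sym_iff:
  assumes "X \<subseteq> grid_V m n"
  shows "landmark_set (fst (grid_sym_dims s m n)) (snd (grid_sym_dims s m n)) (grid_sym s m n ` X)
    \<longleftrightarrow> landmark_set m n X"
proof
  have "grid_dist (grid_sym_inv s m n u) (grid_sym_inv s m n v) = grid_dist u v"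
    if "u \<in> grid_V (fst (grid_sym_dims s m n)) (snd (grid_sym_dims s m n))"
       "v \<in> grid_V (fst (grid_sym_dims s m n)) (snd (grid_sym_dims s m n))" for u v
    using that grid_dist_grid_sym[of "grid_sym_inv s m n u" m n "grid_sym_inv s m n v" s]
    by (simp add: grid_sym_inv_in_grid_V grid_sym_grid_sym_inv)
  then show "landmark_set m n X" if "landmark_set (fst (grid_sym_dims s m n))
      (snd (grid_sym_dims s m n)) (grid_sym s m n ` X)"
    using landmark_set_isometric_image[OF grid_sym_inv_image_grid_V _ that]
    by (simp add: grid_sym_inv_image_grid_sym_image[OF assms])
qed (rule landmark_set_isometric_image[OF grid_sym_image_grid_V grid_dist_grid_sym])

lemma grid_sym_image_grid_sym_inv_image:
  "Y \<subseteq> grid_V (fst (grid_sym_dims s m n)) (snd (grid_sym_dims s m n)) \<Longrightarrow>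
    grid_sym s m n ` grid_sym_inv s m n ` Y = Y"
proof -
  assume "Y \<subseteq> grid_V (fst (grid_sym_dims s m n)) (snd (grid_sym_dims s m n))"
  then have "grid_sym s m n ` grid_sym_inv s m n ` Y = (\<lambda>y. y) ` Y"
    unfolding image_image by (intro image_cong) (auto intro: grid_sym_grid_sym_inv)
  then show ?thesis by simp
qed

lemma inj_on_grid_sym: "inj_on (grid_sym s m n) (grid_V m n)"
  by (rule inj_on_inverseI[of _ "grid_sym_inv s m n"]) (rule grid_sym_inv_grid_sym)

lemma inj_on_grid_sym_inv:
  "inj_on (grid_sym_inv s m n) (grid_V (fst (grid_sym_dims s m n)) (snd (grid_sym_dims s m n)))"
  by (rule inj_on_inverseI[of _ "grid_sym s m n"]) (rule grid_sym_grid_sym_inv)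

lemma minimal_landmark_set_grid_sym:
  assumes "minimal_landmark_set m n X"
  shows "minimal_landmark_set (fst (grid_sym_dims s m n)) (snd (grid_sym_dims s m n)) (grid_sym s m n ` X)"
  unfolding minimal_landmark_set_def
proof (intro conjI allI impI notI)
  have "landmark_set m n X" and no_smaller: "\<And>Z. Z \<subset> X \<Longrightarrow> \<not> landmark_set m n Z"
    using assms by (auto simp: minimal_landmark_set_def)
  then have X: "X \<subseteq> grid_V m n" by (simp add: landmark_set_def)
  then show "landmark_set (fst (grid_sym_dims s m n)) (snd (grid_sym_dims s m n)) (grid_sym s m n ` X)"
    using \<open>landmark_set m n X\<close> by (simp add: landmark_set_grid_sym_iff)
  fix Y assume "Y \<subset> grid_sym s m n ` X"
    and Y: "landmark_set (fst (grid_sym_dims s m n)) (snd (grid_sym_dims s m n)) Y"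
  then obtain Z where "Z \<subset> X" "Y = grid_sym s m n ` Z"
    by (metis psubsetE psubsetI subset_imageE)
  with Y X show False
    using no_smaller landmark_set_grid_sym_iff[of Z m n s] by auto
qed

lemma min_cost_landmark_set_grid_sym:
  assumes "min_cost_landmark_set m n c L"
  shows "min_cost_landmark_set (fst (grid_sym_dims s m n)) (snd (grid_sym_dims s m n))
    (c \<circ> grid_sym_inv s m n) (grid_sym s m n ` L)"
  unfolding min_cost_landmark_set_def
proof (intro conjI allI impI)
  let ?m = "fst (grid_sym_dims s m n)" and ?n = "snd (grid_sym_dims s m n)"
  have "landmark_set m n L" and cheapest: "\<And>Z. landmark_set m n Z \<Longrightarrow> sum c L \<le> sum c Z"
    using assms by (auto simp: min_cost_landmark_set_def)
  then have L: "L \<subseteq> grid_V m n" by (simp add: landmark_set_def)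
  then show "landmark_set ?m ?n (grid_sym s m n ` L)"
    using \<open>landmark_set m n L\<close> by (simp add: landmark_set_grid_sym_iff)
  fix Y assume Y: "landmark_set ?m ?n Y"
  then have "Y \<subseteq> grid_V ?m ?n" by (simp add: landmark_set_def)
  have "sum (c \<circ> grid_sym_inv s m n) (grid_sym s m n ` L) = sum (c \<circ> grid_sym_inv s m n \<circ> grid_sym s m n) L"
    by (rule sum.reindex[OF inj_on_subset[OF inj_on_grid_sym L]])
  also have "\<dots> = sum c L"
    by (rule sum.cong[OF refl]) (simp add: grid_sym_inv_grid_sym subsetD[OF L])
  also have "\<dots> \<le> sum c (grid_sym_inv s m n ` Y)"
  proof (rule cheapest)
    have "grid_sym_inv s m n ` Y \<subseteq> grid_V m n"
      using \<open>Y \<subseteq> grid_V ?m ?n\<close> grid_sym_inv_in_grid_V by blast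
    then show "landmark_set m n (grid_sym_inv s m n ` Y)"
      using Y landmark_set_grid_sym_iff[of "grid_sym_inv s m n ` Y" m n s]
      by (simp add: grid_sym_image_grid_sym_inv_image[OF \<open>Y \<subseteq> grid_V ?m ?n\<close>])
  qed
  also have "\<dots> = sum (c \<circ> grid_sym_inv s m n) Y"
    by (rule sum.reindex[OF inj_on_subset[OF inj_on_grid_sym_inv \<open>Y \<subseteq> grid_V ?m ?n\<close>]])
  finally show "sum (c \<circ> grid_sym_inv s m n) (grid_sym s m n ` L) \<le> sum (c \<circ> grid_sym_inv s m n) Y" .
qed

lemma perfect_of_min_cost:
  assumes "2 \<le> m" "2 \<le> n" and nonneg: "\<forall>v\<in>grid_V m n. 0 \<le> c v"
    and Z: "zigzag m n K q" and T: "corresponds m n K q t" and "inj_on t {1..2*K}"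
    and min_cost: "min_cost_landmark_set m n c (t ` {1..2*K})"
  shows "perfect m n c K q t"
  unfolding perfect_def
proof (intro conjI allI impI)
  fix t' assume T': "corresponds m n K q t'"
  have "seq_cost c K t = sum c (t ` {1..2*K})"
    unfolding seq_cost_def sum.reindex[OF \<open>inj_on t {1..2*K}\<close>] by simp
  also have "\<dots> \<le> sum c (t' ` {1..2*K})"
    using min_cost landmark_set_of_corresponding[OF assms(1,2) Z T']
    by (simp add: min_cost_landmark_set_def)
  also have "\<dots> \<le> sum (c \<circ> t') {1..2*K}"
    using T' nonneg by (intro sum_image_le) (auto simp: corresponds_def)
  also have "\<dots> = seq_cost c K t'"
    by (simp add: seq_cost_def)
  finally show "seq_cost c K t \<le> seq_cost c K t'" .
qed (rule T)

lemma landmark_set_meets_opposite_sides: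
  assumes mn: "2 \<le> m" "2 \<le> n" and "landmark_set m n X"
  shows "((\<exists>x\<in>X. fst x = 1) \<and> (\<exists>y\<in>X. fst y = m)) \<or> ((\<exists>x\<in>X. snd x = 1) \<and> (\<exists>y\<in>X. snd y = n))"
proof -
  have X: "X \<subseteq> grid_V m n" "ne_sw_cover m n X" "nw_se_cover m n X"
    using assms landmark_set_iff by blast+
  have bounds: "1 \<le> fst x" "fst x \<le> m" "1 \<le> snd x" "snd x \<le> n" if "x \<in> X" for x
    using X(1) that by (auto simp: grid_V_iff)
  obtain x1 where "x1 \<in> X" "(fst x1 \<le> 1 \<and> 1 < snd x1) \<or> (1 < fst x1 \<and> snd x1 \<le> 1)"
    using X(2) mn unfolding ne_sw_cover_def by (elim allE[of _ 1]) auto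
  then have c1: "\<exists>x\<in>X. fst x = 1 \<or> snd x = 1" using bounds[of x1] by (intro bexI[of _ x1]) auto
  obtain x2 where "x2 \<in> X" "(fst x2 \<le> m - 1 \<and> n - 1 < snd x2) \<or> (m - 1 < fst x2 \<and> snd x2 \<le> n - 1)"
    using X(2) mn unfolding ne_sw_cover_def by (elim allE[of _ "m - 1"] allE[of _ "n - 1"]) auto
  then have c2: "\<exists>x\<in>X. fst x = m \<or> snd x = n" using bounds[of x2] by (intro bexI[of _ x2]) auto
  obtain x3 where "x3 \<in> X" "(fst x3 \<le> 1 \<and> snd x3 \<le> n - 1) \<or> (1 < fst x3 \<and> n - 1 < snd x3)"
    using X(3) mn unfolding nw_se_cover_def by (elim allE[of _ 1] allE[of _ "n - 1"]) auto
  then have c3: "\<exists>x\<in>X. fst x = 1 \<or> snd x = n" using bounds[of x3] by (intro bexI[of _ x3]) auto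
  obtain x4 where "x4 \<in> X" "(fst x4 \<le> m - 1 \<and> snd x4 \<le> 1) \<or> (m - 1 < fst x4 \<and> 1 < snd x4)"
    using X(3) mn unfolding nw_se_cover_def by (elim allE[of _ "m - 1"] allE[of _ 1]) auto
  then have c4: "\<exists>x\<in>X. fst x = m \<or> snd x = 1" using bounds[of x4] by (intro bexI[of _ x4]) auto
  from c1 c2 c3 c4 show ?thesis by blast
qed

lemma landmark_set_orientation:
  assumes "2 \<le> m" "2 \<le> n" and "landmark_set m n X"
  shows "\<exists>s. \<exists>x\<in>grid_sym s m n ` X. \<exists>y\<in>grid_sym s m n ` X.
    fst x = 1 \<and> fst y = fst (grid_sym_dims s m n) \<and> snd x \<le> snd y"
proof -
  have bounds: "fst x \<le> m" "snd x \<le> n" if "x \<in> X" for x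
    using assms(3) that by (auto simp: landmark_set_def grid_V_iff)
  consider (rows) x y where "x \<in> X" "y \<in> X" "fst x = 1" "fst y = m"
    | (columns) x y where "x \<in> X" "y \<in> X" "snd x = 1" "snd y = n"
    using landmark_set_meets_opposite_sides[OF assms] by blast
  then show ?thesis
  proof cases
    case rows
    define s where "s = (False, False, snd y < snd x)"
    have "fst (grid_sym s m n x) = 1" "fst (grid_sym s m n y) = fst (grid_sym_dims s m n)"
      "snd (grid_sym s m n x) \<le> snd (grid_sym s m n y)"
      using rows bounds[of x] bounds[of y] by (auto simp: s_def grid_sym_def grid_sym_dims_def)
    then show ?thesis using rows(1,2) by blast
  next
    case columns
    define s where "s = (True, fst y < fst x, False)"
    have "fst (grid_sym s m n x) = 1" "fst (grid_sym s m n y) = fst (grid_sym_dims s m n)"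
      "snd (grid_sym s m n x) \<le> snd (grid_sym s m n y)"
      using columns bounds[of x] bounds[of y] by (auto simp: s_def grid_sym_def grid_sym_dims_def)
    then show ?thesis using columns(1,2) by blast
  qed
qed

theorem mainTheorem1:
  fixes m n :: nat and c :: "vertex \<Rightarrow> rat"
  assumes "m \<ge> 2" and "n \<ge> 2"
    and "\<forall>v\<in>grid_V m n. c v \<ge> 0"
  shows "(\<forall>k q t. zigzag m n k q \<longrightarrow> corresponds m n k q t \<longrightarrow>
            landmark_set m n (t ` {1..2*k}))
    \<and> (\<forall>L. minimal_landmark_set m n L \<longrightarrow> min_cost_landmark_set m n c L \<longrightarrow> card L \<ge> 4 \<longrightarrow>
         (\<exists>s :: gsym. \<exists>k q t.
             zigzag (fst (grid_sym_dims s m n)) (snd (grid_sym_dims s m n)) k q \<and>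
             perfect (fst (grid_sym_dims s m n)) (snd (grid_sym_dims s m n))
                     (c \<circ> grid_sym_inv s m n) k q t \<and>
             inj_on t {1..2*k} \<and>
             t ` {1..2*k} = grid_sym s m n ` L))"
proof (intro conjI allI impI)
  fix k q t
  assume "zigzag m n k q" "corresponds m n k q t"
  with assms(1,2) show "landmark_set m n (t ` {1..2*k})"
    by (rule landmark_set_of_corresponding)
next
  fix L
  assume min: "minimal_landmark_set m n L" and cost: "min_cost_landmark_set m n c L" and "4 \<le> card L"
  have L: "landmark_set m n L" "L \<subseteq> grid_V m n"
    using min by (auto simp: minimal_landmark_set_def landmark_set_def)
  obtain s where oriented: "\<exists>x\<in>grid_sym s m n ` L. \<exists>y\<in>grid_sym s m n ` L.
      fst x = 1 \<and> fst y = fst (grid_sym_dims s m n) \<and> snd x \<le> snd y"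
    using landmark_set_orientation[OF assms(1,2) L(1)] by blast
  let ?m = "fst (grid_sym_dims s m n)" and ?n = "snd (grid_sym_dims s m n)"
  have mn': "2 \<le> ?m" "2 \<le> ?n" using assms(1,2) by (auto simp: grid_sym_dims_def)
  have "4 \<le> card (grid_sym s m n ` L)"
    using \<open>4 \<le> card L\<close> card_image[OF inj_on_subset[OF inj_on_grid_sym L(2)]] by simp
  moreover obtain x y where "x \<in> grid_sym s m n ` L" "fst x = 1"
      and "y \<in> grid_sym s m n ` L" "fst y = ?m" "snd x \<le> snd y"
    using oriented by blast
  ultimately obtain k q t where "zigzag ?m ?n k q" "corresponds ?m ?n k q t" "inj_on t {1..2*k}"
      and image: "t ` {1..2*k} = grid_sym s m n ` L"
    using minimal_landmark_set_zigzag[OF mn' minimal_landmark_set_grid_sym[OF min]] by meson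
  moreover have "perfect ?m ?n (c \<circ> grid_sym_inv s m n) k q t"
    using mn' _ calculation(1-3)
  proof (rule perfect_of_min_cost)
    show "\<forall>v\<in>grid_V ?m ?n. 0 \<le> (c \<circ> grid_sym_inv s m n) v"
      using assms(3) grid_sym_inv_in_grid_V by simp
    show "min_cost_landmark_set ?m ?n (c \<circ> grid_sym_inv s m n) (t ` {1..2*k})"
      unfolding image by (rule min_cost_landmark_set_grid_sym[OF cost])
  qed
  ultimately show "\<exists>s :: gsym. \<exists>k q t. zigzag (fst (grid_sym_dims s m n)) (snd (grid_sym_dims s m n)) k q \<and>
      perfect (fst (grid_sym_dims s m n)) (snd (grid_sym_dims s m n)) (c \<circ> grid_sym_inv s m n) k q t \<and>
      inj_on t {1..2*k} \<and> t ` {1..2*k} = grid_sym s m n ` L"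
    by (intro exI[of _ s] exI[of _ k] exI[of _ q] exI[of _ t] conjI)
qed

end
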